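(* Let $\mathcal N$ and $\mathcal M$ be quantum channels satisfying $s$-detailed balance with respect to $\rho_\beta$, and suppose $\mathbb V_{\rho_\beta}(\mathcal M)>0$. Let $\rho$ be an arbitrary initial state and $\epsilon,\eta>0$. Set $T_{burn}=t_{mix}(\eta)$ and let $K$ satisfy $K\ge\frac{2\mathbb V_{\rho_\beta}(\mathcal M)}{\epsilon^2\eta}\,t_{aut,K}$. Then the outcomes of the single-trajectory algorithm satisfy $$\Pr_\rho\left(\left|\frac1K\sum_{t=1}^Ke_t-\mathbb E_{\rho_\beta}(\mathcal M)\right|\ge\epsilon\right)\le2\eta.$$
   Context: $H$ is an $n$-qubit Hermitian operator, $\beta>0$, $\rho_\beta=e^{-\beta H}/\operatorname{tr}(e^{-\beta H})$. For a channel $\mathcal T(X)=\sum_uK_uXK_u^\dagger$, $\mathcal T^\dagger(X)=\sum_uK_u^\dagger XK_u$. $\langle A,B\rangle_s=\operatorname{tr}(A^\dagger\rho_\beta^{1-s}B\rho_\beta^s)$; $\mathcal T$ satisfies $s$-detailed balance if $\langle A,\mathcal T^\dagger(B)\rangle_s=\langle\mathcal T^\dagger(A),B\rangle_s$ for all $A,B$. $\mathcal M$ has Kraus operators $\{O_u\}_u$ indexed by finitely many real outcomes $u$; applied to a state it gives outcome $u$ with probability $\operatorname{tr}(O_u\rho O_u^\dagger)$ and post-state $\propto O_u\rho O_u^\dagger$. $\mathbb E_{\rho_\beta}(\mathcal M)=\sum_uu\operatorname{tr}(O_u\rho_\beta O_u^\dagger)$, $\mathbb V_{\rho_\beta}(\mathcal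 M)=\sum_u|u-\mathbb E_{\rho_\beta}(\mathcal M)|^2\operatorname{tr}(O_u\rho_\beta O_u^\dagger)$, $\widehat{\mathcal M}(X)=\sum_u(u-\mathbb E_{\rho_\beta}(\mathcal M))O_uXO_u^\dagger$, $\mathcal E=\mathcal M\circ\mathcal N\circ\mathcal M$, $\widehat{\mathcal E}=\mathcal M\circ\mathcal N\circ\widehat{\mathcal M}$, $\mathrm{Cor}_{\rho_\beta}(\mathcal E^t)=\operatorname{tr}(\widehat{\mathcal E}\circ\mathcal E^t\circ\widehat{\mathcal E}(\rho_\beta))$, $C(t)=\mathrm{Cor}_{\rho_\beta}(\mathcal E^t)/\mathbb V_{\rho_\beta}(\mathcal M)$, $t_{aut,K}=\frac12+\sum_{t=1}^K(1-\frac tK)C(t-1)$. Mixing time $t_{mix}(\eta)=\min\{t\in\mathbb N:\|\mathcal N^t(\sigma)-\rho_\beta\|_1\le\eta$ for all states $\sigma\}$. Single-trajectory algorithm with inputs $\mathcal N,\mathcal M,\rho,T_{burn},K$: apply $\mathcal N$ $T_{burn}$ times to $\rho$; then for $t=1,\dots,K$ apply $\mathcal M$ (record outcome $e_t$), then $\mathcal N$, then $\mathcal M$ (outcome discarded). $\Pr_\rho$ is probability over all outcomes of this process started from $\rho$. *)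

theory Defs
  imports "HOL-Analysis.Analysis"
begin

(* Operators on the Hilbert space C^d, d = CARD('d) (= 2^n for n qubits),
   are represented as matrices of type complex^'d^'d. *)
type_synonym 'd cmat = "complex^'d^'d"

definition adj :: "'d::finite cmat \<Rightarrow> 'd cmat" where
  "adj A = (\<chi> i j. cnj (A $ j $ i))"

definition cscale :: "complex \<Rightarrow> 'd::finite cmat \<Rightarrow> 'd cmat" where
  "cscale c A = (\<chi> i j. c * A $ i $ j)"

definition hermitian :: "'d::finite cmat \<Rightarrow> bool" where
  "hermitian A \<longleftrightarrow> adj A = A"

definition unitary :: "'d::finite cmat \<Rightarrow> bool" where
  "unitary U \<longleftrightarrow> adj U ** U = mat 1 \<and> U ** adj U = mat 1"

definition diagm :: "('d::finite \<Rightarrow> complex) \<Rightarrow> 'd cmat" where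
  "diagm f = (\<chi> i j. if i = j then f i else 0)"

definition psd :: "'d::finite cmat \<Rightarrow> bool" where
  "psd A \<longleftrightarrow> hermitian A \<and>
     (\<forall>v::complex^'d. 0 \<le> Re (\<Sum>i\<in>UNIV. cnj (v $ i) * (A *v v) $ i))"

definition density_op :: "'d::finite cmat \<Rightarrow> bool" where
  "density_op \<sigma> \<longleftrightarrow> psd \<sigma> \<and> trace \<sigma> = 1"

definition mfun :: "(real \<Rightarrow> real) \<Rightarrow> 'd::finite cmat \<Rightarrow> 'd cmat" where
  "mfun f A = (let p = (SOME p :: 'd cmat \<times> ('d \<Rightarrow> real).
                   unitary (fst p) \<and> A = fst p ** diagm (\<lambda>i. complex_of_real (snd p i)) ** adj (fst p))
               in fst p ** diagm (\<lambda>i. complex_of_real (f (snd p i))) ** adj (fst p))"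

definition gibbs :: "real \<Rightarrow> 'd::finite cmat \<Rightarrow> 'd cmat" where
  "gibbs \<beta> H = cscale (1 / trace (mfun (\<lambda>x. exp (- \<beta> * x)) H)) (mfun (\<lambda>x. exp (- \<beta> * x)) H)"

definition mpowr :: "'d::finite cmat \<Rightarrow> real \<Rightarrow> 'd cmat" where
  "mpowr A s = mfun (\<lambda>x. x powr s) A"

definition trace_norm :: "'d::finite cmat \<Rightarrow> real" where
  "trace_norm X = Re (trace (mfun sqrt (adj X ** X)))"

definition inner_s :: "real \<Rightarrow> 'd::finite cmat \<Rightarrow> 'd cmat \<Rightarrow> 'd cmat \<Rightarrow> complex" where
  "inner_s s \<rho> A B = trace (adj A ** mpowr \<rho> (1 - s) ** B ** mpowr \<rho> s)"

definition kraus_chan :: "'i set \<Rightarrow> ('i \<Rightarrow> 'd::finite cmat) \<Rightarrow> 'd cmat \<Rightarrow> 'd cmat" where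
  "kraus_chan I K X = (\<Sum>i\<in>I. K i ** X ** adj (K i))"

definition kraus_dual :: "'i set \<Rightarrow> ('i \<Rightarrow> 'd::finite cmat) \<Rightarrow> 'd cmat \<Rightarrow> 'd cmat" where
  "kraus_dual I K X = (\<Sum>i\<in>I. adj (K i) ** X ** K i)"

definition is_channel :: "'i set \<Rightarrow> ('i \<Rightarrow> 'd::finite cmat) \<Rightarrow> bool" where
  "is_channel I K \<longleftrightarrow> finite I \<and> (\<Sum>i\<in>I. adj (K i) ** K i) = mat 1"

definition detailed_balance :: "real \<Rightarrow> 'd::finite cmat \<Rightarrow> 'i set \<Rightarrow> ('i \<Rightarrow> 'd cmat) \<Rightarrow> bool" where
  "detailed_balance s \<rho> I K \<longleftrightarrow>
     (\<forall>A B. inner_s s \<rho> A (kraus_dual I K B) = inner_s s \<rho> (kraus_dual I K A) B)"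

(* Measurement M with outcomes u \<in> U (finite set of reals) and Kraus operators Om u *)
definition meas_mean :: "'d::finite cmat \<Rightarrow> real set \<Rightarrow> (real \<Rightarrow> 'd cmat) \<Rightarrow> real" where
  "meas_mean \<rho> U Om = (\<Sum>u\<in>U. u * Re (trace (Om u ** \<rho> ** adj (Om u))))"

definition meas_var :: "'d::finite cmat \<Rightarrow> real set \<Rightarrow> (real \<Rightarrow> 'd cmat) \<Rightarrow> real" where
  "meas_var \<rho> U Om = (\<Sum>u\<in>U. \<bar>u - meas_mean \<rho> U Om\<bar>^2 * Re (trace (Om u ** \<rho> ** adj (Om u))))"

definition meas_hat :: "'d::finite cmat \<Rightarrow> real set \<Rightarrow> (real \<Rightarrow> 'd cmat) \<Rightarrow> 'd cmat \<Rightarrow> 'd cmat" where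
  "meas_hat \<rho> U Om X = (\<Sum>u\<in>U. cscale (complex_of_real (u - meas_mean \<rho> U Om)) (Om u ** X ** adj (Om u)))"

definition chan_E :: "'i set \<Rightarrow> ('i \<Rightarrow> 'd::finite cmat) \<Rightarrow> real set \<Rightarrow> (real \<Rightarrow> 'd cmat) \<Rightarrow> 'd cmat \<Rightarrow> 'd cmat" where
  "chan_E I K U Om = kraus_chan U Om \<circ> kraus_chan I K \<circ> kraus_chan U Om"

definition chan_E_hat :: "'d::finite cmat \<Rightarrow> 'i set \<Rightarrow> ('i \<Rightarrow> 'd cmat) \<Rightarrow> real set \<Rightarrow> (real \<Rightarrow> 'd cmat) \<Rightarrow> 'd cmat \<Rightarrow> 'd cmat" where
  "chan_E_hat \<rho> I K U Om = kraus_chan U Om \<circ> kraus_chan I K \<circ> meas_hat \<rho> U Om"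

definition corr :: "'d::finite cmat \<Rightarrow> 'i set \<Rightarrow> ('i \<Rightarrow> 'd cmat) \<Rightarrow> real set \<Rightarrow> (real \<Rightarrow> 'd cmat) \<Rightarrow> nat \<Rightarrow> real" where
  "corr \<rho> I K U Om t =
     Re (trace ((chan_E_hat \<rho> I K U Om \<circ> (chan_E I K U Om ^^ t) \<circ> chan_E_hat \<rho> I K U Om) \<rho>))"

definition autocorr :: "'d::finite cmat \<Rightarrow> 'i set \<Rightarrow> ('i \<Rightarrow> 'd cmat) \<Rightarrow> real set \<Rightarrow> (real \<Rightarrow> 'd cmat) \<Rightarrow> nat \<Rightarrow> real" where
  "autocorr \<rho> I K U Om t = corr \<rho> I K U Om t / meas_var \<rho> U Om"

definition t_aut :: "'d::finite cmat \<Rightarrow> 'i set \<Rightarrow> ('i \<Rightarrow> 'd cmat) \<Rightarrow> real set \<Rightarrow> (real \<Rightarrow> 'd cmat) \<Rightarrow> nat \<Rightarrow> real" where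
  "t_aut \<rho> I K U Om KK = 1/2 + (\<Sum>t=1..KK. (1 - real t / real KK) * autocorr \<rho> I K U Om (t - 1))"

definition t_mix :: "'d::finite cmat \<Rightarrow> 'i set \<Rightarrow> ('i \<Rightarrow> 'd cmat) \<Rightarrow> real \<Rightarrow> nat" where
  "t_mix \<rho> I K \<eta> = (LEAST t. \<forall>\<sigma>. density_op \<sigma> \<longrightarrow> trace_norm ((kraus_chan I K ^^ t) \<sigma> - \<rho>) \<le> \<eta>)"

(* Unnormalised post-measurement operator of the loop of the single-trajectory
   algorithm after recording outcomes us = [e_1,...,e_k]:
   each round applies M with recorded outcome u (O_u . O_u^\<dagger>), then N,
   then M with outcome discarded (the channel M). *)
fun traj :: "'i set \<Rightarrow> ('i \<Rightarrow> 'd::finite cmat) \<Rightarrow> real set \<Rightarrow> (real \<Rightarrow> 'd cmat) \<Rightarrow> real list \<Rightarrow> 'd cmat \<Rightarrow> 'd cmat" where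
  "traj I K U Om [] \<sigma> = \<sigma>"
| "traj I K U Om (u # us) \<sigma> = traj I K U Om us (kraus_chan U Om (kraus_chan I K (Om u ** \<sigma> ** adj (Om u))))"

(* Pr_rho(P(e_1,...,e_KK)) for the single-trajectory algorithm with burn-in Tburn *)
definition traj_prob :: "'i set \<Rightarrow> ('i \<Rightarrow> 'd::finite cmat) \<Rightarrow> real set \<Rightarrow> (real \<Rightarrow> 'd cmat) \<Rightarrow> 'd cmat \<Rightarrow> nat \<Rightarrow> nat \<Rightarrow> (real list \<Rightarrow> bool) \<Rightarrow> real" where
  "traj_prob I K U Om \<rho> Tburn KK P =
     (\<Sum>us\<in>{us. set us \<subseteq> U \<and> length us = KK \<and> P us}.
        Re (trace (traj I K U Om us ((kraus_chan I K ^^ Tburn) \<rho>))))"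

end

(*
  Detailed balance tested against the identity shows that the Gibbs state R is fixed by both N and
  M, so the outcome record of the loop started in R is stationary.  Weighting round i by h_i(u)
  turns sums over outcome records into compositions of transfer maps; with u - mu in rounds t and s
  this gives E[(u_t - mu)(u_s - mu)] = Var(M) for t = s and the correlation Cor(E^(|t-s|-1))
  otherwise.  Summing over t and s yields E_R[(mean - mu)^2] = 2 Var(M) t_aut,K / K, and Chebyshev
  bounds the deviation probability under R by eta.  After the burn-in the state is eta-close to R
  in trace distance, and the outcome map of an event is completely positive and trace
  non-increasing, so the probability changes by at most eta.

  The functional calculus behind the Gibbs state, matrix powers and the trace norm needs the
  spectral theorem for Hermitian matrices, proved here by maximising the Rayleigh quotient.
*)

theory Submission
  imports Defs
begin

section \<open>Matrix algebra\<close>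

lemma adj_nth [simp]: "adj A $ i $ j = cnj (A $ j $ i)"
  by (simp add: adj_def)

lemma diagm_nth [simp]: "diagm f $ i $ j = (if i = j then f i else 0)"
  by (simp add: diagm_def)

lemma mat_nth: "mat c $ i $ j = (if i = j then c else 0)"
  by (simp add: mat_def)

lemma matrix_mult_nth: "(A ** B) $ i $ j = (\<Sum>k\<in>UNIV. A $ i $ k * B $ k $ j)"
  by (simp add: matrix_matrix_mult_def)

lemma matrix_vector_mult_nth: "(A *v x) $ i = (\<Sum>j\<in>UNIV. A $ i $ j * x $ j)"
  by (simp add: matrix_vector_mult_def)

lemma matrix_vector_mult_scale: "A *v (c *s x) = c *s (A *v x :: 'a::comm_semiring_1^'n)"
  by (simp add: vec_eq_iff matrix_vector_mult_nth sum_distrib_left mult.left_commute)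

lemma cscale_of_real: "cscale (of_real r) A = r *\<^sub>R A"
  by (auto simp: cscale_def vec_eq_iff simp flip: scaleR_conv_of_real)

lemma adj_adj [simp]: "adj (adj A) = A"
  by (simp add: vec_eq_iff)

lemma adj_mult: "adj (A ** B) = adj B ** adj A"
  by (simp add: vec_eq_iff matrix_mult_nth mult.commute)

lemma adj_mat_1 [simp]: "adj (mat 1) = mat 1"
  by (simp add: vec_eq_iff mat_nth)

lemma adj_diagm: "adj (diagm f) = diagm (\<lambda>i. cnj (f i))"
  by (simp add: vec_eq_iff)

lemma matrix_add_rdistrib: "(A + B) ** C = A ** C + B ** (C :: 'a::semiring_1^'n^'m)"
  by (simp add: vec_eq_iff matrix_matrix_mult_def distrib_right sum.distrib)

lemma diagm_mult_nth: "(diagm f ** B) $ i $ j = f i * B $ i $ j"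
proof -
  have "(diagm f ** B) $ i $ j = (\<Sum>k\<in>UNIV. if k = i then f i * B $ k $ j else 0)"
    unfolding matrix_mult_nth by (rule sum.cong) auto
  then show ?thesis
    by simp
qed

lemma diagm_mult: "diagm f ** diagm g = diagm (\<lambda>i. f i * g i)"
  by (simp add: vec_eq_iff diagm_mult_nth)

lemma trace_zero [simp]: "trace 0 = 0"
  by (simp add: trace_def)

lemma trace_sum: "trace (\<Sum>x\<in>S. f x) = (\<Sum>x\<in>S. trace (f x :: 'a::comm_semiring_1^'n^'n))"
  by (induct S rule: infinite_finite_induct) (auto simp: trace_add)

lemma trace_scaleR: "trace (r *\<^sub>R A) = r *\<^sub>R trace (A :: 'a::real_algebra_1^'n^'n)"
  by (simp add: trace_def scaleR_sum_right)

lemma trace_diagm: "trace (diagm f) = (\<Sum>i\<in>UNIV. f i)"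
  by (simp add: trace_def)

lemma trace_eqI: "(\<And>B. trace (X ** B) = trace (Y ** B)) \<Longrightarrow> X = (Y :: 'a::comm_semiring_1^'n^'n)"
proof -
  assume eq: "\<And>B. trace (X ** B) = trace (Y ** B)"
  have "(Z ** (\<chi> a b. if a = j \<and> b = i then 1 else 0)) $ a $ a = (if a = i then Z $ a $ j else 0)"
    for Z :: "'a^'n^'n" and i j a
    by (simp add: matrix_mult_nth if_distrib cong: if_cong)
  then have "trace (Z ** (\<chi> a b. if a = j \<and> b = i then 1 else 0)) = Z $ i $ j" for Z :: "'a^'n^'n" and i j
    by (simp add: trace_def)
  then have "X $ i $ j = Y $ i $ j" for i j
    using eq[of "\<chi> a b. if a = j \<and> b = i then 1 else 0"] by simp
  then show "X = Y"
    by (simp add: vec_eq_iff)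
qed

lemma sum_matrix_mult_left: "(\<Sum>x\<in>S. f x) ** B = (\<Sum>x\<in>S. f x ** (B :: 'a::semiring_1^'n^'n))"
  by (induct S rule: infinite_finite_induct) (auto simp: matrix_add_rdistrib)

lemma sum_matrix_mult_right: "B ** (\<Sum>x\<in>S. f x) = (\<Sum>x\<in>S. B ** f x :: 'a::semiring_1^'n^'n)"
  by (induct S rule: infinite_finite_induct) (auto simp: matrix_add_ldistrib)

lemma linear_matrix_sandwich: "linear (\<lambda>X. A ** X ** (B :: 'a::real_algebra_1^'n^'n))"
  by (simp add: linear_iff matrix_add_ldistrib matrix_add_rdistrib matrix_scalar_ac
      scalar_matrix_assoc)

lemma linear_kraus_chan: "linear (kraus_chan I K)"
  unfolding kraus_chan_def[abs_def]
  by (simp add: linear_compose_sum linear_matrix_sandwich)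

lemma trace_mult_cycle: "trace (A ** B ** C) = trace (B ** C ** (A :: 'a::comm_semiring_1^'n^'n))"
  using trace_mul_sym[of A "B ** C"] by (simp add: matrix_mul_assoc)

lemma trace_kraus_chan_dual: "trace (kraus_chan I K X ** Y) = trace (X ** kraus_dual I K Y)"
proof -
  have "trace (kraus_chan I K X ** Y) = (\<Sum>i\<in>I. trace (K i ** X ** adj (K i) ** Y))"
    by (simp add: kraus_chan_def sum_matrix_mult_left trace_sum)
  also have "\<dots> = (\<Sum>i\<in>I. trace (X ** (adj (K i) ** Y ** K i)))"
    using trace_mult_cycle[of "K _" X "adj (K _) ** Y"] by (simp add: matrix_mul_assoc)
  also have "\<dots> = trace (X ** kraus_dual I K Y)"
    by (simp add: kraus_dual_def sum_matrix_mult_right trace_sum)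
  finally show ?thesis .
qed

lemma trace_kraus_chan:
  assumes "is_channel I K"
  shows "trace (kraus_chan I K X) = trace X"
  using trace_kraus_chan_dual[of I K X "mat 1"] assms
  by (simp add: kraus_dual_def is_channel_def)

section \<open>The Hermitian inner product and the spectral theorem\<close>

definition cinner :: "complex^'n::finite \<Rightarrow> complex^'n \<Rightarrow> complex" where
  "cinner x y = (\<Sum>i\<in>UNIV. cnj (x $ i) * y $ i)"

definition orth_compl :: "(complex^'n::finite) set \<Rightarrow> (complex^'n) set" where
  "orth_compl S = {y. \<forall>v\<in>S. cinner v y = 0}"

lemma vector_scale_of_real: "of_real r *s x = r *\<^sub>R (x :: complex^'n)"
  by (auto simp: vec_eq_iff simp flip: scaleR_conv_of_real)

lemma cinner_adj: "cinner x (A *v y) = cinner (adj A *v x) y"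
proof -
  have "cinner x (A *v y) = (\<Sum>i\<in>UNIV. \<Sum>j\<in>UNIV. cnj (x $ i) * A $ i $ j * y $ j)"
    by (simp add: cinner_def matrix_vector_mult_nth sum_distrib_left mult.assoc)
  also have "\<dots> = (\<Sum>j\<in>UNIV. \<Sum>i\<in>UNIV. cnj (x $ i) * A $ i $ j * y $ j)"
    by (rule sum.swap)
  also have "\<dots> = cinner (adj A *v x) y"
    by (simp add: cinner_def matrix_vector_mult_nth sum_distrib_left sum_distrib_right
        mult.commute mult.left_commute)
  finally show ?thesis .
qed

lemma cinner_commute: "cinner y x = cnj (cinner x y)"
  by (simp add: cinner_def mult.commute)

lemma cinner_add_left: "cinner (x + y) z = cinner x z + cinner y z"
  by (simp add: cinner_def distrib_right sum.distrib)

lemma cinner_add_right: "cinner x (y + z) = cinner x y + cinner x z"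
  by (simp add: cinner_def distrib_left sum.distrib)

lemma cinner_diff_right: "cinner x (y - z) = cinner x y - cinner x z"
  by (simp add: cinner_def right_diff_distrib sum_subtractf)

lemma cinner_scale_left: "cinner (c *s x) y = cnj c * cinner x y"
  by (simp add: cinner_def sum_distrib_left mult.assoc)

lemma cinner_scale_right: "cinner x (c *s y) = c * cinner x y"
  by (simp add: cinner_def sum_distrib_left mult.left_commute)

lemma cinner_zero_right [simp]: "cinner x 0 = 0"
  by (simp add: cinner_def)

lemma cinner_scaleR_right: "cinner x (r *\<^sub>R y) = of_real r * cinner x y"
  by (simp add: cinner_scale_right flip: vector_scale_of_real)

lemma cinner_sum_right: "cinner x (\<Sum>v\<in>S. f v) = (\<Sum>v\<in>S. cinner x (f v))"
  by (induct S rule: infinite_finite_induct) (auto simp: cinner_add_right)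

lemma cinner_self: "cinner x x = of_real ((norm x)\<^sup>2)"
proof -
  have "cinner x x = (\<Sum>i\<in>UNIV. of_real ((cmod (x $ i))\<^sup>2))"
    unfolding cinner_def
    by (rule sum.cong) (auto simp: complex_norm_square mult.commute simp del: of_real_power)
  also have "\<dots> = of_real ((norm x)\<^sup>2)"
    by (simp add: norm_vec_def L2_set_def sum_nonneg del: of_real_power flip: of_real_sum)
  finally show ?thesis .
qed

lemma norm_eq_1_iff_cinner: "norm x = 1 \<longleftrightarrow> cinner x x = 1"
proof -
  have "cinner x x = 1 \<longleftrightarrow> (norm x)\<^sup>2 = 1"
    unfolding cinner_self by (metis of_real_eq_1_iff)
  then show ?thesis
    using norm_ge_zero[of x] by (auto simp: power2_eq_1_iff)
qed

lemma cinner_cauchy_schwarz: "cmod (cinner x y) \<le> norm x * norm y"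
proof -
  have "cmod (cinner x y) \<le> (\<Sum>i\<in>UNIV. cmod (x $ i) * cmod (y $ i))"
    unfolding cinner_def by (rule order_trans[OF norm_sum]) (simp add: norm_mult)
  also have "\<dots> \<le> L2_set (\<lambda>i. cmod (x $ i)) UNIV * L2_set (\<lambda>i. cmod (y $ i)) UNIV"
    using L2_set_mult_ineq[of "\<lambda>i. cmod (x $ i)" "\<lambda>i. cmod (y $ i)" UNIV] by simp
  finally show ?thesis
    by (simp add: norm_vec_def)
qed

lemma continuous_on_cinner:
  assumes "continuous_on S f" "continuous_on S g"
  shows "continuous_on S (\<lambda>x. cinner (f x) (g x))"
proof -
  have nth: "continuous_on S (\<lambda>x. h x $ i)" if "continuous_on S h" for h :: "_ \<Rightarrow> complex^'n" and i
    using continuous_on_compose2[OF linear_continuous_on[OF bounded_linear_vec_nth] that] by auto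
  show ?thesis
    unfolding cinner_def by (intro continuous_intros nth assms)
qed

lemma closed_orth_compl: "closed (orth_compl S)"
proof -
  have "orth_compl S = (\<Inter>v\<in>S. {y. cinner v y = 0})"
    by (auto simp: orth_compl_def)
  then show ?thesis
    by (simp add: closed_INT closed_Collect_eq continuous_on_cinner continuous_on_const)
qed

lemma hermitian_cinner: "hermitian A \<Longrightarrow> cinner x (A *v y) = cinner (A *v x) y"
  by (simp add: hermitian_def cinner_adj)

lemma hermitian_cinner_self_real:
  assumes "hermitian A"
  shows "cinner x (A *v x) = of_real (Re (cinner x (A *v x)))"
proof -
  have "cnj (cinner x (A *v x)) = cinner x (A *v x)"
    using hermitian_cinner[OF assms, of x x] cinner_commute[of x "A *v x"] by simp
  then show ?thesis
    by (simp add: complex_eq_iff)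
qed

lemma nonpos_if_le_all_pos_mult:
  fixes a b :: real
  assumes "\<And>t. t > 0 \<Longrightarrow> a \<le> t * b"
  shows "a \<le> 0"
proof (rule ccontr)
  assume "\<not> a \<le> 0"
  define t where "t = a / (2 * (\<bar>b\<bar> + 1))"
  have t: "t > 0"
    using \<open>\<not> a \<le> 0\<close> by (simp add: t_def)
  then have "t * b \<le> t * \<bar>b\<bar>"
    by (intro mult_left_mono) auto
  moreover have "t * \<bar>b\<bar> < a"
  proof -
    have "0 \<le> a * \<bar>b\<bar>"
      using \<open>\<not> a \<le> 0\<close> by simp
    with \<open>\<not> a \<le> 0\<close> have "0 < a * \<bar>b\<bar> + a * 2"
      by linarith
    then show ?thesis
      by (simp add: t_def field_simps)
  qed
  ultimately show False
    using assms[OF t] by linarith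
qed

lemma orth_compl_add:
  "y \<in> orth_compl S \<Longrightarrow> z \<in> orth_compl S \<Longrightarrow> y + z \<in> orth_compl S"
  by (simp add: orth_compl_def cinner_add_right)

lemma orth_compl_scale: "y \<in> orth_compl S \<Longrightarrow> c *s y \<in> orth_compl S"
  by (simp add: orth_compl_def cinner_scale_right)

lemma rayleigh_bound_homogeneous:
  assumes max: "\<And>y. y \<in> orth_compl S \<Longrightarrow> norm y = 1 \<Longrightarrow> Re (cinner y (A *v y)) \<le> c"
    and w: "w \<in> orth_compl S"
  shows "Re (cinner w (A *v w)) \<le> c * (norm w)\<^sup>2"
proof (cases "w = 0")
  case False
  define w' where "w' = of_real (1 / norm w) *s w"
  have "w' \<in> orth_compl S"
    unfolding w'_def using w by (rule orth_compl_scale)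
  moreover have "norm w' = 1"
    using False by (simp only: w'_def vector_scale_of_real) simp
  ultimately have "(1 / norm w)\<^sup>2 * Re (cinner w (A *v w)) \<le> c"
    using max[of w'] by (simp add: w'_def cinner_scale_left cinner_scale_right
        matrix_vector_mult_scale power2_eq_square)
  then show ?thesis
    using False by (simp add: field_simps)
qed simp

lemma hermitian_perturbation:
  fixes A :: "'d::finite cmat" and t :: real
  assumes herm: "hermitian A" and xx: "cinner x x = 1" and xy: "cinner x y = 0"
    and Ax: "A *v x = y + of_real c *s x"
  defines "w \<equiv> x + of_real t *s y"
  shows "(norm w)\<^sup>2 = 1 + t\<^sup>2 * (norm y)\<^sup>2"
    and "Re (cinner w (A *v w)) = c + 2 * t * (norm y)\<^sup>2 + t\<^sup>2 * Re (cinner y (A *v y))"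
proof -
  have yx: "cinner y x = 0"
    using xy by (subst cinner_commute) simp
  have yy: "cinner y y = of_real ((norm y)\<^sup>2)"
    by (rule cinner_self)
  have "cinner w w = of_real (1 + t\<^sup>2 * (norm y)\<^sup>2)"
    by (simp add: w_def cinner_add_left cinner_add_right cinner_scale_left cinner_scale_right
        xx xy yx yy power2_eq_square del: of_real_power)
  then show "(norm w)\<^sup>2 = 1 + t\<^sup>2 * (norm y)\<^sup>2"
    using cinner_self[of w] by (metis of_real_eq_iff)
  have xAy: "cinner x (A *v y) = of_real ((norm y)\<^sup>2)" and yAx: "cinner y (A *v x) = of_real ((norm y)\<^sup>2)"
    by (simp_all add: hermitian_cinner[OF herm, of x] Ax cinner_add_left cinner_add_right
        cinner_scale_left cinner_scale_right xx xy yx yy del: of_real_power)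
  have "cinner w (A *v w) = c * cinner x x + of_real t * cinner x (A *v y)
      + of_real t * cinner y (A *v x) + of_real t * of_real t * cinner y (A *v y)"
    by (simp add: w_def Ax matrix_vector_right_distrib matrix_vector_mult_scale cinner_add_left
        cinner_add_right cinner_scale_left cinner_scale_right xy yx algebra_simps)
  then show "Re (cinner w (A *v w)) = c + 2 * t * (norm y)\<^sup>2 + t\<^sup>2 * Re (cinner y (A *v y))"
    by (simp add: xx xAy yAx power2_eq_square)
qed

text \<open>If \<open>A x \<noteq> c x\<close> for the maximal value \<open>c\<close>, the quotient increases to first order
  along \<open>y = A x - c x\<close>.\<close>

lemma rayleigh_maximizer_eigenvector:
  fixes A :: "'d::finite cmat"
  assumes herm: "hermitian A"
    and invariant: "\<And>y. y \<in> orth_compl S \<Longrightarrow> A *v y \<in> orth_compl S"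
    and x: "x \<in> orth_compl S" "norm x = 1"
    and max: "\<And>y. y \<in> orth_compl S \<Longrightarrow> norm y = 1 \<Longrightarrow>
                 Re (cinner y (A *v y)) \<le> Re (cinner x (A *v x))"
  shows "A *v x = of_real (Re (cinner x (A *v x))) *s x"
proof -
  define c where "c = Re (cinner x (A *v x))"
  define y where "y = A *v x - of_real c *s x"
  define n where "n = (norm y)\<^sup>2"
  have xx: "cinner x x = 1"
    using x(2) by (simp add: norm_eq_1_iff_cinner)
  have xy: "cinner x y = 0"
    using hermitian_cinner_self_real[OF herm, of x]
    by (simp add: y_def cinner_diff_right cinner_scale_right xx c_def)
  have Ax: "A *v x = y + of_real c *s x"
    by (simp add: y_def)
  have y: "y \<in> orth_compl S"
    using invariant[OF x(1)] x(1) by (simp add: orth_compl_def y_def cinner_diff_right cinner_scale_right)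
  have "2 * n \<le> t * (c * n - Re (cinner y (A *v y)))" if t: "t > 0" for t
  proof -
    have "x + of_real t *s y \<in> orth_compl S"
      by (intro orth_compl_add orth_compl_scale x y)
    with max have "Re (cinner (x + of_real t *s y) (A *v (x + of_real t *s y)))
        \<le> c * (norm (x + of_real t *s y))\<^sup>2"
      unfolding c_def by (rule rayleigh_bound_homogeneous)
    then have "c + 2 * t * n + t\<^sup>2 * Re (cinner y (A *v y)) \<le> c * (1 + t\<^sup>2 * n)"
      using hermitian_perturbation[OF herm xx xy Ax, of t] by (simp add: c_def n_def)
    then have "t * (2 * n) \<le> t * (t * (c * n - Re (cinner y (A *v y))))"
      by (simp add: power2_eq_square algebra_simps)
    then show ?thesis
      using t by (simp add: mult_le_cancel_left_pos)
  qed
  then have "2 * n \<le> 0"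
    by (intro nonpos_if_le_all_pos_mult) auto
  then have "y = 0"
    by (simp add: n_def)
  then have "A *v x = of_real c *s x"
    using Ax by simp
  then show ?thesis
    unfolding c_def .
qed

lemma hermitian_eigenvector_in_orth_compl:
  fixes A :: "'d::finite cmat"
  assumes herm: "hermitian A"
    and invariant: "\<And>y. y \<in> orth_compl S \<Longrightarrow> A *v y \<in> orth_compl S"
    and x0: "x0 \<in> orth_compl S" "x0 \<noteq> 0"
  obtains x c where "x \<in> orth_compl S" "norm x = 1" "A *v x = of_real c *s x"
proof -
  define C where "C = orth_compl S \<inter> sphere 0 1"
  have compact: "compact C"
    unfolding C_def by (intro closed_Int_compact closed_orth_compl compact_sphere)
  have "(1 / norm x0) *\<^sub>R x0 \<in> C"
    using x0 by (simp add: C_def orth_compl_def cinner_scaleR_right)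
  then have nonempty: "C \<noteq> {}"
    by blast
  have cont: "continuous_on C (\<lambda>x. Re (cinner x (A *v x)))"
    by (intro continuous_intros continuous_on_cinner linear_continuous_on
        matrix_vector_mul_bounded_linear)
  obtain x where "x \<in> C" and max: "\<forall>y\<in>C. Re (cinner y (A *v y)) \<le> Re (cinner x (A *v x))"
    using continuous_attains_sup[OF compact nonempty cont] by blast
  then have x: "x \<in> orth_compl S" "norm x = 1"
    by (simp_all add: C_def)
  have max': "Re (cinner y (A *v y)) \<le> Re (cinner x (A *v x))" if "y \<in> orth_compl S" "norm y = 1" for y
  proof -
    have "y \<in> C"
      using that by (simp add: C_def)
    then show ?thesis
      using max by blast
  qed
  have "A *v x = of_real (Re (cinner x (A *v x))) *s x"
    by (rule rayleigh_maximizer_eigenvector[OF herm invariant x max'])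
  with x show thesis
    by (rule that)
qed

lemma orth_compl_nonzero:
  fixes S :: "(complex^'d::finite) set"
  assumes S: "finite S" "card S < CARD('d)"
    and unit: "\<forall>v\<in>S. norm v = 1" and orth: "\<forall>v\<in>S. \<forall>w\<in>S. v \<noteq> w \<longrightarrow> cinner v w = 0"
  obtains x0 where "x0 \<in> orth_compl S" "x0 \<noteq> 0"
proof -
  have "vec.span S \<noteq> UNIV"
  proof
    assume "vec.span S = UNIV"
    then have "vec.dim (UNIV :: (complex^'d) set) \<le> card S"
      using vec.dim_le_card[of UNIV S] S(1) by auto
    then show False
      using vec_dim_card[where 'a=complex and 'n='d] S(2) by simp
  qed
  then obtain x where x: "x \<notin> vec.span S"
    by auto
  define x0 where "x0 = x - (\<Sum>v\<in>S. cinner v x *s v)"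
  have "(\<Sum>v\<in>S. cinner v x *s v) \<in> vec.span S"
    by (intro vec.span_sum vec.span_scale vec.span_base)
  then have "x0 \<noteq> 0"
    using x by (auto simp: x0_def)
  moreover have "cinner w x0 = 0" if w: "w \<in> S" for w
  proof -
    have "(\<Sum>v\<in>S. cinner w (cinner v x *s v)) = (\<Sum>v\<in>S. if v = w then cinner w x else 0)"
      using orth unit w by (intro sum.cong) (auto simp: cinner_scale_right norm_eq_1_iff_cinner)
    then show ?thesis
      using S(1) w by (simp add: x0_def cinner_diff_right cinner_sum_right)
  qed
  ultimately show thesis
    using that by (auto simp: orth_compl_def)
qed

lemma orth_compl_eigenvectors_invariant:
  assumes herm: "hermitian A" and eig: "\<forall>v\<in>S. \<exists>c. A *v v = of_real c *s v"
    and y: "y \<in> orth_compl S"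
  shows "A *v y \<in> orth_compl S"
proof -
  have "cinner v (A *v y) = 0" if v: "v \<in> S" for v
  proof -
    obtain c where "A *v v = of_real c *s v"
      using eig v by blast
    then show ?thesis
      using y v by (simp add: hermitian_cinner[OF herm] cinner_scale_left orth_compl_def)
  qed
  then show ?thesis
    by (simp add: orth_compl_def)
qed

lemma hermitian_orthonormal_eigenvectors:
  fixes A :: "'d::finite cmat"
  assumes herm: "hermitian A"
  shows "k \<le> CARD('d) \<Longrightarrow> \<exists>S. finite S \<and> card S = k \<and>
     (\<forall>v\<in>S. norm v = 1 \<and> (\<exists>c. A *v v = of_real c *s v)) \<and>
     (\<forall>v\<in>S. \<forall>w\<in>S. v \<noteq> w \<longrightarrow> cinner v w = 0)"
proof (induct k)
  case 0
  show ?case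
    by (intro exI[of _ "{}"]) auto
next
  case (Suc k)
  then obtain S where S: "finite S" "card S = k"
    and eig: "\<forall>v\<in>S. norm v = 1 \<and> (\<exists>c. A *v v = of_real c *s v)"
    and orth: "\<forall>v\<in>S. \<forall>w\<in>S. v \<noteq> w \<longrightarrow> cinner v w = 0"
    by auto
  obtain x0 where "x0 \<in> orth_compl S" "x0 \<noteq> 0"
    using orth_compl_nonzero[of S] S Suc(2) eig orth by auto
  moreover have "\<And>y. y \<in> orth_compl S \<Longrightarrow> A *v y \<in> orth_compl S"
    using orth_compl_eigenvectors_invariant[OF herm] eig by blast
  ultimately obtain y c where y: "y \<in> orth_compl S" "norm y = 1" "A *v y = of_real c *s y"
    using hermitian_eigenvector_in_orth_compl[OF herm] by blast
  have "y \<notin> S"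
    using y(1,2) by (auto simp: orth_compl_def norm_eq_1_iff_cinner)
  have "cinner y v = 0" if "v \<in> S" for v
    using y(1) that by (subst cinner_commute) (simp add: orth_compl_def)
  then show ?case
    using S eig orth y \<open>y \<notin> S\<close>
    by (intro exI[of _ "insert y S"]) (auto simp: orth_compl_def)
qed

theorem hermitian_unitary_diagonalization:
  fixes A :: "'d::finite cmat"
  assumes herm: "hermitian A"
  shows "\<exists>U l. unitary U \<and> A = U ** diagm (\<lambda>i. of_real (l i)) ** adj U"
proof -
  obtain S where S: "finite S" "card S = CARD('d)"
    and eig: "\<forall>v\<in>S. norm v = 1 \<and> (\<exists>c. A *v v = of_real c *s v)"
    and orth: "\<forall>v\<in>S. \<forall>w\<in>S. v \<noteq> w \<longrightarrow> cinner v w = 0"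
    using hermitian_orthonormal_eigenvectors[OF herm, of "CARD('d)"] by auto
  obtain f where f: "bij_betw f (UNIV :: 'd set) S"
    using finite_same_card_bij[of "UNIV :: 'd set" S] S by auto
  then have fS: "f j \<in> S" and f_inj: "f j = f k \<longleftrightarrow> j = k" for j k
    by (auto simp: bij_betw_def inj_on_def)
  define l where "l j = (SOME c. A *v f j = of_real c *s f j)" for j
  have l: "A *v f j = of_real (l j) *s f j" for j
    unfolding l_def using eig fS[of j] by (auto intro: someI_ex)
  define U :: "'d cmat" where "U = (\<chi> i j. f j $ i)"
  have "(adj U ** U) $ j $ k = cinner (f j) (f k)" for j k
    by (simp add: U_def matrix_mult_nth cinner_def)
  moreover have "cinner (f j) (f k) = (if j = k then 1 else 0)" for j k
    using eig orth fS f_inj by (auto simp: cinner_self)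
  ultimately have UU: "adj U ** U = mat 1"
    by (simp add: vec_eq_iff mat_nth)
  then have UU': "U ** adj U = mat 1"
    using matrix_left_right_inverse by blast
  have "(A ** U) $ i $ j = (U ** diagm (\<lambda>i. of_real (l i))) $ i $ j" for i j
  proof -
    have "(A ** U) $ i $ j = (A *v f j) $ i"
      by (simp add: U_def matrix_mult_nth matrix_vector_mult_nth)
    moreover have "(U ** diagm (\<lambda>i. of_real (l i))) $ i $ j = of_real (l j) * f j $ i"
      by (simp add: U_def matrix_mult_nth if_distrib cong: if_cong)
    ultimately show ?thesis
      by (simp add: l)
  qed
  then have AU: "A ** U = U ** diagm (\<lambda>i. of_real (l i))"
    by (simp add: vec_eq_iff)
  have "A = A ** (U ** adj U)"
    by (simp add: UU')
  also have "\<dots> = U ** diagm (\<lambda>i. of_real (l i)) ** adj U"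
    by (simp add: matrix_mul_assoc AU)
  finally have "A = U ** diagm (\<lambda>i. of_real (l i)) ** adj U" .
  then show ?thesis
    using UU UU' unfolding unitary_def by blast
qed

section \<open>Functional calculus, Gibbs states and the trace norm\<close>

lemma scaleR_matrix_vector_mult: "(r *\<^sub>R A) *v x = r *\<^sub>R (A *v x :: complex^'n)"
  by (simp add: vec_eq_iff matrix_vector_mult_nth scaleR_sum_right)

lemma cinner_adj_mult_self: "cinner w ((adj A ** A) *v z) = cinner (A *v w) (A *v z)"
  by (simp add: cinner_adj flip: matrix_vector_mul_assoc)

lemma cinner_column: "cinner (column i W) (M *v column j W) = (adj W ** M ** W) $ i $ j"
  by (simp add: column_def cinner_def matrix_mult_nth matrix_vector_mult_nth sum_distrib_left
      sum_distrib_right mult.assoc mult.left_commute) (rule sum.swap)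

lemma psd_iff_cinner: "psd A \<longleftrightarrow> hermitian A \<and> (\<forall>v. 0 \<le> Re (cinner v (A *v v)))"
  by (simp add: psd_def cinner_def)

lemma psd_scaleR: "psd A \<Longrightarrow> 0 \<le> r \<Longrightarrow> psd (r *\<^sub>R A)"
  by (simp add: psd_iff_cinner hermitian_def vec_eq_iff scaleR_matrix_vector_mult
      cinner_scaleR_right)

lemma psd_adj_mult_self: "psd (adj A ** A)"
  by (simp add: psd_iff_cinner hermitian_def adj_mult cinner_adj_mult_self cinner_self)

lemma unitary_conj_mult:
  assumes "unitary V"
  shows "(V ** diagm f ** adj V) ** (V ** diagm g ** adj V) = V ** diagm (\<lambda>i. f i * g i) ** adj V"
proof -
  have "(V ** diagm f ** adj V) ** (V ** diagm g ** adj V) = V ** diagm f ** (adj V ** V) ** diagm g ** adj V"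
    by (simp add: matrix_mul_assoc)
  also have "\<dots> = V ** diagm (\<lambda>i. f i * g i) ** adj V"
    using assms by (simp add: unitary_def diagm_mult flip: matrix_mul_assoc)
  finally show ?thesis .
qed

lemma trace_unitary_conj:
  assumes "unitary V"
  shows "trace (V ** diagm f ** adj V) = (\<Sum>i\<in>UNIV. f i)"
  using assms trace_mult_cycle[of V "diagm f" "adj V"]
  by (simp add: unitary_def trace_diagm flip: matrix_mul_assoc)

lemma diagm_vector_mult_nth: "(diagm f *v w) $ i = f i * w $ i"
proof -
  have "(diagm f *v w) $ i = (\<Sum>k\<in>UNIV. if k = i then f i * w $ k else 0)"
    unfolding matrix_vector_mult_nth by (rule sum.cong) auto
  then show ?thesis
    by simp
qed

lemma cinner_diagm:
  "cinner w (diagm (\<lambda>i. of_real (f i)) *v w) = of_real (\<Sum>i\<in>UNIV. f i * (cmod (w $ i))\<^sup>2)"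
proof -
  have "cinner w (diagm (\<lambda>i. of_real (f i)) *v w) = (\<Sum>i\<in>UNIV. of_real (f i * (cmod (w $ i))\<^sup>2))"
    unfolding cinner_def diagm_vector_mult_nth
    by (rule sum.cong) (auto simp: complex_norm_square mult.commute mult.left_commute
        simp del: of_real_power)
  then show ?thesis
    by simp
qed

lemma cinner_unitary_conj:
  "cinner v ((V ** diagm (\<lambda>i. of_real (f i)) ** adj V) *v v)
     = of_real (\<Sum>i\<in>UNIV. f i * (cmod ((adj V *v v) $ i))\<^sup>2)"
proof -
  have "cinner v ((V ** diagm (\<lambda>i. of_real (f i)) ** adj V) *v v)
      = cinner v (V *v (diagm (\<lambda>i. of_real (f i)) *v (adj V *v v)))"
    by (simp add: matrix_vector_mul_assoc matrix_mul_assoc)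
  also have "\<dots> = cinner (adj V *v v) (diagm (\<lambda>i. of_real (f i)) *v (adj V *v v))"
    by (rule cinner_adj)
  finally show ?thesis
    by (simp only: cinner_diagm)
qed

lemma psd_unitary_conj:
  assumes "\<And>i. 0 \<le> f i"
  shows "psd (V ** diagm (\<lambda>i. of_real (f i)) ** adj V)"
  using assms
  by (simp add: psd_iff_cinner hermitian_def adj_mult adj_diagm matrix_mul_assoc
      cinner_unitary_conj sum_nonneg)

lemma psd_unitary_conj_nonneg:
  fixes V :: "'d::finite cmat"
  assumes "unitary V" "A = V ** diagm (\<lambda>i. of_real (\<mu> i)) ** adj V" "psd A"
  shows "0 \<le> \<mu> i"
proof -
  define e :: "complex^'d" where "e = (\<chi> k. if k = i then 1 else 0)"
  have "adj V *v (V *v e) = e"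
    using assms(1) by (simp add: unitary_def matrix_vector_mul_assoc)
  then have "cinner (V *v e) (A *v (V *v e)) = of_real (\<Sum>k\<in>UNIV. \<mu> k * (cmod (e $ k))\<^sup>2)"
    by (simp add: assms(2) cinner_unitary_conj)
  also have "(\<Sum>k\<in>UNIV. \<mu> k * (cmod (e $ k))\<^sup>2) = (\<Sum>k\<in>UNIV. if k = i then \<mu> k else 0)"
    by (rule sum.cong) (auto simp: e_def)
  finally have "cinner (V *v e) (A *v (V *v e)) = of_real (\<mu> i)"
    by simp
  moreover have "0 \<le> Re (cinner (V *v e) (A *v (V *v e)))"
    using assms(3) by (simp add: psd_iff_cinner)
  ultimately show ?thesis
    by simp
qed

lemma mfun_eigendecomposition:
  fixes A :: "'d::finite cmat"
  assumes "hermitian A"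
  obtains V \<mu> where "unitary V" "A = V ** diagm (\<lambda>i. of_real (\<mu> i)) ** adj V"
    "\<And>f. mfun f A = V ** diagm (\<lambda>i. of_real (f (\<mu> i))) ** adj V"
proof -
  define P where "P p \<longleftrightarrow> unitary (fst p) \<and>
      A = fst p ** diagm (\<lambda>i. of_real (snd p i)) ** adj (fst p)" for p :: "'d cmat \<times> ('d \<Rightarrow> real)"
  obtain U l where "unitary U" "A = U ** diagm (\<lambda>i. of_real (l i)) ** adj U"
    using hermitian_unitary_diagonalization[OF assms] by blast
  then have "P (U, l)"
    by (simp add: P_def)
  then have "P (SOME p. P p)"
    by (rule someI)
  moreover have "mfun f A = fst (SOME p. P p) ** diagm (\<lambda>i. of_real (f (snd (SOME p. P p) i)))
      ** adj (fst (SOME p. P p))" for f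
    unfolding mfun_def Let_def P_def ..
  ultimately show thesis
    using that unfolding P_def by blast
qed

lemma psd_gibbs: "hermitian H \<Longrightarrow> psd (gibbs \<beta> H)"
proof -
  assume "hermitian H"
  then obtain V ev where V: "unitary V"
    and mf: "\<And>f. mfun f H = V ** diagm (\<lambda>i. of_real (f (ev i))) ** adj V"
    using mfun_eigendecomposition by blast
  define G where "G = mfun (\<lambda>x. exp (- \<beta> * x)) H"
  define Z where "Z = (\<Sum>i\<in>UNIV. exp (- \<beta> * ev i))"
  have "psd G"
    by (simp add: G_def mf psd_unitary_conj)
  moreover have "trace G = of_real Z"
    by (simp add: G_def Z_def mf trace_unitary_conj[OF V])
  moreover have "Z > 0"
    by (simp add: Z_def sum_pos)
  moreover have "gibbs \<beta> H = cscale (1 / trace G) G"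
    unfolding gibbs_def G_def ..
  ultimately show "psd (gibbs \<beta> H)"
    using cscale_of_real[of "1 / Z" G] by (simp add: psd_scaleR)
qed

lemma mpowr_mult_complement:
  assumes "psd R"
  shows "mpowr R s ** mpowr R (1 - s) = R"
proof -
  obtain W \<mu> where W: "unitary W" and R: "R = W ** diagm (\<lambda>i. of_real (\<mu> i)) ** adj W"
    and mf: "\<And>f. mfun f R = W ** diagm (\<lambda>i. of_real (f (\<mu> i))) ** adj W"
    using mfun_eigendecomposition assms unfolding psd_def by blast
  have "\<mu> i powr s * \<mu> i powr (1 - s) = \<mu> i" for i
    using psd_unitary_conj_nonneg[OF W R assms, of i]
    by (cases "\<mu> i = 0") (auto simp flip: powr_add)
  moreover have "mpowr R s ** mpowr R (1 - s)
      = W ** diagm (\<lambda>i. of_real (\<mu> i powr s) * of_real (\<mu> i powr (1 - s))) ** adj W"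
    by (simp only: mpowr_def mf unitary_conj_mult[OF W])
  ultimately show ?thesis
    by (simp add: R flip: of_real_mult)
qed

text \<open>Evaluate the trace in an orthonormal eigenbasis \<open>w\<^sub>i\<close> of \<open>D\<^sup>\<dagger>D\<close>: the norms
  \<open>\<parallel>D w\<^sub>i\<parallel>\<close> are the singular values of \<open>D\<close>, which sum to \<open>\<parallel>D\<parallel>\<^sub>1\<close>.\<close>

lemma trace_contraction_le_trace_norm:
  fixes P D :: "'d::finite cmat"
  assumes contraction: "\<And>w z. cmod (cinner w (P *v z)) \<le> norm w * norm z"
  shows "cmod (trace (P ** D)) \<le> trace_norm D"
proof -
  have "hermitian (adj D ** D)"
    using psd_adj_mult_self psd_def by blast
  then obtain W \<mu> where W: "unitary W" and M: "adj D ** D = W ** diagm (\<lambda>i. of_real (\<mu> i)) ** adj W"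
    and mf: "\<And>f. mfun f (adj D ** D) = W ** diagm (\<lambda>i. of_real (f (\<mu> i))) ** adj W"
    using mfun_eigendecomposition by blast
  have nonneg: "0 \<le> \<mu> i" for i
    by (rule psd_unitary_conj_nonneg[OF W M psd_adj_mult_self])
  have WW: "adj W ** W = mat 1" "W ** adj W = mat 1"
    using W by (simp_all add: unitary_def)
  have trace_norm: "trace_norm D = (\<Sum>i\<in>UNIV. sqrt (\<mu> i))"
    by (simp add: trace_norm_def mf trace_unitary_conj[OF W] Re_sum)
  have unit: "norm (column i W) = 1" for i
    using cinner_column[of i W "mat 1" i] WW(1) by (simp add: norm_eq_1_iff_cinner mat_nth)
  have "adj W ** (adj D ** D) ** W = (adj W ** W) ** diagm (\<lambda>i. of_real (\<mu> i)) ** (adj W ** W)"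
    by (simp add: M matrix_mul_assoc)
  then have "cinner (column i W) ((adj D ** D) *v column i W) = of_real (\<mu> i)" for i
    by (simp add: cinner_column WW(1))
  then have norm_sq: "(norm (D *v column i W))\<^sup>2 = \<mu> i" for i
    by (simp add: cinner_adj_mult_self cinner_self del: of_real_power)
  have singular: "norm (D *v column i W) = sqrt (\<mu> i)" for i
    by (simp flip: norm_sq)
  have "trace (P ** D) = trace (adj W ** (P ** D) ** W)"
    using trace_mult_cycle[of "adj W" "P ** D" W] WW(2) by (simp flip: matrix_mul_assoc)
  also have "\<dots> = (\<Sum>i\<in>UNIV. cinner (column i W) (P *v (D *v column i W)))"
    by (simp add: trace_def cinner_column matrix_vector_mul_assoc)
  finally have "cmod (trace (P ** D)) \<le> (\<Sum>i\<in>UNIV. cmod (cinner (column i W) (P *v (D *v column i W))))"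
    by (simp add: norm_sum)
  also have "\<dots> \<le> (\<Sum>i\<in>UNIV. sqrt (\<mu> i))"
    using contraction[of "column _ W" "D *v column _ W"] by (intro sum_mono) (simp add: unit singular)
  finally show ?thesis
    by (simp add: trace_norm)
qed

section \<open>Kraus maps\<close>

definition kraus_map :: "'d::finite cmat list \<Rightarrow> 'd cmat \<Rightarrow> 'd cmat" where
  "kraus_map As X = (\<Sum>A\<leftarrow>As. A ** X ** adj A)"

definition kraus_effect :: "'d::finite cmat list \<Rightarrow> 'd cmat" where
  "kraus_effect As = (\<Sum>A\<leftarrow>As. adj A ** A)"

lemma kraus_map_Nil [simp]: "kraus_map [] X = 0"
  by (simp add: kraus_map_def)

lemma kraus_map_Cons [simp]: "kraus_map (A # As) X = A ** X ** adj A + kraus_map As X"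
  by (simp add: kraus_map_def)

lemma kraus_map_append: "kraus_map (As @ Bs) X = kraus_map As X + kraus_map Bs X"
  by (simp add: kraus_map_def)

lemma kraus_effect_Nil [simp]: "kraus_effect [] = 0"
  by (simp add: kraus_effect_def)

lemma kraus_effect_Cons [simp]: "kraus_effect (A # As) = adj A ** A + kraus_effect As"
  by (simp add: kraus_effect_def)

lemma linear_kraus_map: "linear (kraus_map As)"
proof (induct As)
  case Nil
  have "kraus_map [] = (\<lambda>X. 0)"
    by (simp add: fun_eq_iff)
  then show ?case
    by (simp add: linear_zero)
next
  case (Cons A As)
  have "kraus_map (A # As) = (\<lambda>X. A ** X ** adj A + kraus_map As X)"
    by (simp add: fun_eq_iff)
  then show ?case
    using Cons by (simp add: linear_compose_add linear_matrix_sandwich)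
qed

lemma kraus_chan_eq_kraus_map:
  assumes "finite I"
  obtains As where "kraus_chan I K = kraus_map As"
proof -
  obtain xs where "set xs = I" "distinct xs"
    using finite_distinct_list[OF assms] by blast
  then have "kraus_chan I K = kraus_map (map K xs)"
    by (auto simp: fun_eq_iff kraus_chan_def kraus_map_def sum_list_distinct_conv_sum_set comp_def)
  then show thesis
    by (rule that)
qed

lemma kraus_map_sandwich: "A ** kraus_map Bs X ** adj A = kraus_map (map ((**) A) Bs) X"
  by (induct Bs) (simp_all add: matrix_add_ldistrib matrix_add_rdistrib adj_mult matrix_mul_assoc)

lemma kraus_map_compose: "kraus_map As (kraus_map Bs X) = kraus_map [A ** B. A \<leftarrow> As, B \<leftarrow> Bs] X"
  by (induct As) (simp_all add: kraus_map_append kraus_map_sandwich)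

lemma kraus_map_sum:
  assumes "finite S" and "\<And>x. x \<in> S \<Longrightarrow> \<exists>As. F x = kraus_map As"
  shows "\<exists>As. (\<lambda>X. \<Sum>x\<in>S. F x X) = kraus_map As"
  using assms
proof (induct S rule: finite_induct)
  case empty
  have "(\<lambda>X. 0) = kraus_map []"
    by (simp add: fun_eq_iff)
  then show ?case
    by auto
next
  case (insert x S)
  obtain As Bs where "F x = kraus_map As" "(\<lambda>X. \<Sum>x\<in>S. F x X) = kraus_map Bs"
    using insert by blast
  then have "(\<lambda>X. \<Sum>x\<in>insert x S. F x X) = kraus_map (As @ Bs)"
    using insert(1,2) by (auto simp: fun_eq_iff kraus_map_append)
  then show ?case
    by blast
qed

lemma trace_sandwich_nonneg:
  assumes "psd R"
  shows "0 \<le> Re (trace (A ** R ** adj A))"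
proof -
  have "(A ** R ** adj A) $ i $ i = cinner (column i (adj A)) (R *v column i (adj A))" for i
    using cinner_column[of i "adj A" R i] by simp
  then show ?thesis
    using assms by (simp add: trace_def Re_sum psd_iff_cinner sum_nonneg)
qed

lemma trace_kraus_map_nonneg: "psd R \<Longrightarrow> 0 \<le> Re (trace (kraus_map As R))"
  by (induct As) (simp_all add: trace_add trace_sandwich_nonneg)

lemma trace_sandwich: "trace (A ** X ** adj A) = trace (adj A ** A ** X)"
  using trace_mult_cycle[of A X "adj A"] trace_mul_sym[of X "adj A ** A"]
  by (simp add: matrix_mul_assoc)

lemma trace_kraus_map: "trace (kraus_map As X) = trace (kraus_effect As ** X)"
  by (induct As) (simp_all add: trace_add matrix_add_rdistrib trace_sandwich)

lemma cinner_kraus_effect: "cinner w (kraus_effect As *v z) = (\<Sum>A\<leftarrow>As. cinner (A *v w) (A *v z))"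
  by (induct As) (simp_all add: matrix_vector_mult_add_rdistrib cinner_add_right cinner_adj_mult_self)

lemma cinner_kraus_effect_self: "cinner w (kraus_effect As *v w) = of_real (\<Sum>A\<leftarrow>As. (norm (A *v w))\<^sup>2)"
  by (induct As) (simp_all add: matrix_vector_mult_add_rdistrib cinner_add_right cinner_adj_mult_self
      cinner_self del: of_real_power)

lemma sum_list_abs_mult_le:
  fixes a b :: "'a \<Rightarrow> real"
  shows "(\<Sum>x\<leftarrow>xs. \<bar>a x\<bar> * \<bar>b x\<bar>) \<le> sqrt (\<Sum>x\<leftarrow>xs. (a x)\<^sup>2) * sqrt (\<Sum>x\<leftarrow>xs. (b x)\<^sup>2)"
  using L2_set_mult_ineq[of "\<lambda>i. a (xs ! i)" "\<lambda>i. b (xs ! i)" "{..<length xs}"]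
  by (simp add: sum_list_sum_nth atLeast0LessThan L2_set_def)

lemma kraus_effect_contraction:
  assumes "\<And>w. (\<Sum>A\<leftarrow>As. (norm (A *v w))\<^sup>2) \<le> (norm w)\<^sup>2"
  shows "cmod (cinner w (kraus_effect As *v z)) \<le> norm w * norm z"
proof -
  have "cmod (cinner w (kraus_effect As *v z)) \<le> (\<Sum>A\<leftarrow>As. cmod (cinner (A *v w) (A *v z)))"
    unfolding cinner_kraus_effect by (induct As) (auto intro: order_trans[OF norm_triangle_ineq])
  also have "\<dots> \<le> (\<Sum>A\<leftarrow>As. \<bar>norm (A *v w)\<bar> * \<bar>norm (A *v z)\<bar>)"
    by (intro sum_list_mono) (simp add: cinner_cauchy_schwarz)
  also have "\<dots> \<le> sqrt (\<Sum>A\<leftarrow>As. (norm (A *v w))\<^sup>2) * sqrt (\<Sum>A\<leftarrow>As. (norm (A *v z))\<^sup>2)"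
    by (rule sum_list_abs_mult_le)
  also have "\<dots> \<le> sqrt ((norm w)\<^sup>2) * sqrt ((norm z)\<^sup>2)"
    using assms by (intro mult_mono real_sqrt_le_mono) (auto intro!: sum_list_nonneg)
  finally show ?thesis
    by simp
qed

text \<open>The complementary map forces \<open>kraus_effect As \<le> 1\<close>, so the effect is a contraction.\<close>

lemma trace_kraus_map_le_trace_norm:
  assumes complement: "\<And>X. trace (kraus_map As X) + trace (kraus_map Bs X) = trace X"
  shows "Re (trace (kraus_map As D)) \<le> trace_norm D"
proof -
  have "kraus_effect As + kraus_effect Bs = mat 1"
    by (rule trace_eqI) (simp add: matrix_add_rdistrib trace_add complement flip: trace_kraus_map)
  then have "cinner w (kraus_effect As *v w) + cinner w (kraus_effect Bs *v w) = cinner w w" for w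
    by (metis cinner_add_right matrix_vector_mul_lid matrix_vector_mult_add_rdistrib)
  then have "(\<Sum>A\<leftarrow>As. (norm (A *v w))\<^sup>2) + (\<Sum>A\<leftarrow>Bs. (norm (A *v w))\<^sup>2) = (norm w)\<^sup>2" for w
    by (simp add: cinner_kraus_effect_self cinner_self del: of_real_power flip: of_real_add)
  moreover have "0 \<le> (\<Sum>A\<leftarrow>Bs. (norm (A *v w))\<^sup>2)" for w
    by (intro sum_list_nonneg) auto
  ultimately have "(\<Sum>A\<leftarrow>As. (norm (A *v w))\<^sup>2) \<le> (norm w)\<^sup>2" for w
    by (metis le_add_same_cancel1)
  then have "cmod (trace (kraus_effect As ** D)) \<le> trace_norm D"
    by (intro trace_contraction_le_trace_norm kraus_effect_contraction)
  then show ?thesis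
    unfolding trace_kraus_map using complex_Re_le_cmod order_trans by blast
qed

section \<open>Detailed balance implies stationarity\<close>

lemma inner_s_one_left:
  assumes "psd R"
  shows "inner_s s R (mat 1) Y = trace (R ** Y)"
  using trace_mul_sym[of "mpowr R (1 - s) ** Y" "mpowr R s"]
  by (simp add: inner_s_def matrix_mul_assoc mpowr_mult_complement[OF assms])

lemma detailed_balance_stationary:
  assumes channel: "is_channel I K" and balance: "detailed_balance s R I K" and "psd R"
  shows "kraus_chan I K R = R"
proof (rule trace_eqI)
  fix B
  have "inner_s s R (mat 1) (kraus_dual I K B) = inner_s s R (kraus_dual I K (mat 1)) B"
    using balance by (simp add: detailed_balance_def)
  moreover have "kraus_dual I K (mat 1) = mat 1"
    using channel by (simp add: kraus_dual_def is_channel_def)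
  ultimately show "trace (kraus_chan I K R ** B) = trace (R ** B)"
    by (simp add: inner_s_one_left[OF \<open>psd R\<close>] trace_kraus_chan_dual)
qed

section \<open>Outcome statistics of the trajectory\<close>

text \<open>Round \<open>i\<close> of the loop, with the recorded outcome \<open>u\<close> weighted by \<open>h i u\<close>, acts as
  \<open>weighted_step (h i)\<close>; product weights on outcome records therefore factorise round by round.\<close>

locale measured_chain =
  fixes I :: "'i set" and K :: "'i \<Rightarrow> 'd::finite cmat"
    and U :: "real set" and Om :: "real \<Rightarrow> 'd cmat"
  assumes N_channel: "is_channel I K" and M_channel: "is_channel U Om"
begin

abbreviation N :: "'d cmat \<Rightarrow> 'd cmat" where "N \<equiv> kraus_chan I K"
abbreviation M :: "'d cmat \<Rightarrow> 'd cmat" where "M \<equiv> kraus_chan U Om"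
abbreviation E :: "'d cmat \<Rightarrow> 'd cmat" where "E \<equiv> chan_E I K U Om"
abbreviation outcomes :: "nat \<Rightarrow> real list set" where
  "outcomes n \<equiv> {us. set us \<subseteq> U \<and> length us = n}"

definition weighted_step :: "(real \<Rightarrow> real) \<Rightarrow> 'd cmat \<Rightarrow> 'd cmat" where
  "weighted_step h X = (\<Sum>u\<in>U. h u *\<^sub>R M (N (Om u ** X ** adj (Om u))))"

primrec weighted_steps :: "(nat \<Rightarrow> real \<Rightarrow> real) \<Rightarrow> nat \<Rightarrow> 'd cmat \<Rightarrow> 'd cmat" where
  "weighted_steps h 0 X = X"
| "weighted_steps h (Suc n) X = weighted_steps (\<lambda>i. h (Suc i)) n (weighted_step (h 0) X)"

lemma finite_U: "finite U"
  using M_channel by (simp add: is_channel_def)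

lemma linear_weighted_step: "linear (weighted_step h)"
  unfolding weighted_step_def[abs_def]
  by (intro linear_compose_sum ballI linear_compose_scale_right linear_compose[unfolded comp_def,
        OF linear_matrix_sandwich linear_compose[unfolded comp_def, OF linear_kraus_chan linear_kraus_chan]])

lemma linear_weighted_steps: "linear (weighted_steps h n)"
proof (induct n arbitrary: h)
  case 0
  show ?case
    by (simp add: linear_ident)
next
  case (Suc n)
  have "weighted_steps h (Suc n) = weighted_steps (\<lambda>i. h (Suc i)) n \<circ> weighted_step (h 0)"
    by (simp add: fun_eq_iff)
  then show ?case
    by (simp only: linear_compose[OF linear_weighted_step Suc])
qed

lemma weighted_step_alt_def: "weighted_step h X = M (N (\<Sum>u\<in>U. h u *\<^sub>R (Om u ** X ** adj (Om u))))"
  by (simp add: weighted_step_def linear_sum[OF linear_kraus_chan] linear_scale[OF linear_kraus_chan])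

lemma weighted_step_one: "weighted_step (\<lambda>_. 1) = E"
  by (simp add: fun_eq_iff weighted_step_alt_def chan_E_def kraus_chan_def)

lemma weighted_step_centered: "weighted_step (\<lambda>u. u - meas_mean R U Om) = chan_E_hat R I K U Om"
  by (simp add: fun_eq_iff weighted_step_alt_def chan_E_hat_def meas_hat_def cscale_of_real
      del: of_real_diff)

lemma sum_outcomes_weighted:
  "(\<Sum>us\<in>outcomes n. (\<Prod>i<n. h i (us ! i)) *\<^sub>R traj I K U Om us X) = weighted_steps h n X"
proof (induct n arbitrary: h X)
  case 0
  have "outcomes 0 = {[]}"
    by auto
  then show ?case
    by simp
next
  case (Suc n)
  let ?step = "\<lambda>u. M (N (Om u ** X ** adj (Om u)))"
  let ?tail = "\<lambda>u. \<Sum>us\<in>outcomes n. (\<Prod>i<n. h (Suc i) (us ! i)) *\<^sub>R traj I K U Om us (?step u)"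
  have inj: "inj_on (\<lambda>(us, u). u # us) (outcomes n \<times> U)"
    by (auto simp: inj_on_def)
  have "(\<Sum>us\<in>outcomes (Suc n). (\<Prod>i<Suc n. h i (us ! i)) *\<^sub>R traj I K U Om us X)
      = (\<Sum>(us, u)\<in>outcomes n \<times> U. h 0 u *\<^sub>R ((\<Prod>i<n. h (Suc i) (us ! i)) *\<^sub>R traj I K U Om us (?step u)))"
    unfolding lists_length_Suc_eq sum.reindex[OF inj]
    by (simp add: case_prod_beta prod.lessThan_Suc_shift del: prod.lessThan_Suc)
  also have "\<dots> = (\<Sum>u\<in>U. h 0 u *\<^sub>R ?tail u)"
    by (simp add: sum.cartesian_product[symmetric] scaleR_sum_right) (rule sum.swap)
  also have "\<dots> = (\<Sum>u\<in>U. h 0 u *\<^sub>R weighted_steps (\<lambda>i. h (Suc i)) n (?step u))"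
    using Suc[of "\<lambda>i. h (Suc i)"] by simp
  also have "\<dots> = weighted_steps h (Suc n) X"
    by (simp add: weighted_step_def linear_sum[OF linear_weighted_steps]
        linear_scale[OF linear_weighted_steps])
  finally show ?case .
qed

lemma weighted_steps_add:
  "weighted_steps h (a + b) X = weighted_steps (\<lambda>i. h (a + i)) b (weighted_steps h a X)"
  by (induct a arbitrary: h X) simp_all

lemma weighted_steps_ones:
  "(\<And>i. i < n \<Longrightarrow> h i = (\<lambda>_. 1)) \<Longrightarrow> weighted_steps h n X = (E ^^ n) X"
proof (induct n arbitrary: h X)
  case (Suc n)
  then have "weighted_steps h (Suc n) X = (E ^^ n) (E X)"
    by (simp add: weighted_step_one)
  then show ?case
    by (simp add: funpow_swap1)
qed simp

lemma trace_E: "trace (E X) = trace X"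
  by (simp add: chan_E_def trace_kraus_chan[OF N_channel] trace_kraus_chan[OF M_channel])

lemma trace_E_power: "trace ((E ^^ n) X) = trace X"
  by (induct n) (simp_all add: trace_E)

lemma trace_weighted_steps_ones:
  "(\<And>i. i < n \<Longrightarrow> h i = (\<lambda>_. 1)) \<Longrightarrow> trace (weighted_steps h n X) = trace X"
  by (simp add: weighted_steps_ones trace_E_power)

lemma trace_sum_outcomes: "trace (\<Sum>us\<in>outcomes n. traj I K U Om us X) = trace X"
  using sum_outcomes_weighted[where h="\<lambda>_ _. 1"] weighted_steps_ones[where h="\<lambda>_ _. 1"]
  by (simp add: trace_E_power)

lemma traj_kraus_map: "\<exists>As. traj I K U Om us = kraus_map As"
proof (induct us)
  case Nil
  have "traj I K U Om [] = kraus_map [mat 1]"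
    by (simp add: fun_eq_iff)
  then show ?case ..
next
  case (Cons u us)
  obtain As where As: "traj I K U Om us = kraus_map As"
    using Cons by blast
  obtain Bs where Bs: "M = kraus_map Bs"
    using kraus_chan_eq_kraus_map finite_U by blast
  obtain Cs where Cs: "N = kraus_map Cs"
    using kraus_chan_eq_kraus_map N_channel unfolding is_channel_def by blast
  have "traj I K U Om (u # us) X
      = kraus_map [A ** B. A \<leftarrow> As, B \<leftarrow> [B ** C. B \<leftarrow> Bs, C \<leftarrow> [C ** D. C \<leftarrow> Cs, D \<leftarrow> [Om u]]]] X" for X
  proof -
    have "traj I K U Om (u # us) X = kraus_map As (kraus_map Bs (kraus_map Cs (kraus_map [Om u] X)))"
      by (simp add: As Bs Cs)
    then show ?thesis
      by (simp only: kraus_map_compose)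
  qed
  then show ?case
    by blast
qed

lemma trace_traj_nonneg: "psd R \<Longrightarrow> 0 \<le> Re (trace (traj I K U Om us R))"
  using traj_kraus_map trace_kraus_map_nonneg by metis

text \<open>The records outside the event supply the complementary Kraus map.\<close>

lemma sum_outcomes_trace_le:
  assumes "A \<subseteq> outcomes n"
  shows "(\<Sum>us\<in>A. Re (trace (traj I K U Om us X)))
    \<le> (\<Sum>us\<in>A. Re (trace (traj I K U Om us Y))) + trace_norm (X - Y)"
proof -
  have fin: "finite (outcomes n)"
    using finite_lists_length_eq[OF finite_U] .
  then have "finite A"
    using assms finite_subset by blast
  then obtain As where As: "(\<lambda>X. \<Sum>us\<in>A. traj I K U Om us X) = kraus_map As"
    using kraus_map_sum traj_kraus_map by blast
  obtain Bs where Bs: "(\<lambda>X. \<Sum>us\<in>outcomes n - A. traj I K U Om us X) = kraus_map Bs"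
    using kraus_map_sum[of "outcomes n - A"] fin traj_kraus_map by blast
  have "trace (kraus_map As Z) + trace (kraus_map Bs Z) = trace Z" for Z
    using trace_sum_outcomes[where n=n and X=Z] sum.subset_diff[OF assms fin, of "\<lambda>us. traj I K U Om us Z"]
    by (simp add: trace_add add.commute flip: As Bs fun_cong[OF As] fun_cong[OF Bs])
  then have "Re (trace (kraus_map As (X - Y))) \<le> trace_norm (X - Y)"
    by (rule trace_kraus_map_le_trace_norm)
  then show ?thesis
    by (simp add: linear_diff[OF linear_kraus_map] trace_sub Re_sum trace_sum flip: fun_cong[OF As])
qed

end

section \<open>The second moment of the empirical mean under the stationary state\<close>

lemma weighted_chebyshev_inequality:
  fixes f w :: "'a \<Rightarrow> real"
  assumes "finite S" and w: "\<And>x. x \<in> S \<Longrightarrow> 0 \<le> w x" and "0 < \<epsilon>"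
  shows "(\<Sum>x\<in>{x\<in>S. \<epsilon> \<le> \<bar>f x\<bar>}. w x) \<le> (\<Sum>x\<in>S. (f x)\<^sup>2 * w x) / \<epsilon>\<^sup>2"
proof -
  have "(\<Sum>x\<in>{x\<in>S. \<epsilon> \<le> \<bar>f x\<bar>}. w x) \<le> (\<Sum>x\<in>{x\<in>S. \<epsilon> \<le> \<bar>f x\<bar>}. (f x)\<^sup>2 / \<epsilon>\<^sup>2 * w x)"
  proof (intro sum_mono)
    fix x
    assume x: "x \<in> {x\<in>S. \<epsilon> \<le> \<bar>f x\<bar>}"
    then have "\<epsilon>\<^sup>2 \<le> (f x)\<^sup>2"
      using \<open>0 < \<epsilon>\<close> by (metis (mono_tags) mem_Collect_eq abs_le_square_iff abs_of_pos)
    then have "1 \<le> (f x)\<^sup>2 / \<epsilon>\<^sup>2"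
      using \<open>0 < \<epsilon>\<close> by simp
    then have "1 * w x \<le> (f x)\<^sup>2 / \<epsilon>\<^sup>2 * w x"
      using w[of x] x by (intro mult_right_mono) auto
    then show "w x \<le> (f x)\<^sup>2 / \<epsilon>\<^sup>2 * w x"
      by simp
  qed
  also have "\<dots> \<le> (\<Sum>x\<in>S. (f x)\<^sup>2 / \<epsilon>\<^sup>2 * w x)"
    using assms by (intro sum_mono2) auto
  finally show ?thesis
    by (simp add: sum_divide_distrib)
qed

lemma sum_lag_square:
  fixes c :: "nat \<Rightarrow> real"
  shows "(\<Sum>t<n. \<Sum>s<n. c (max t s - min t s))
       = real n * c 0 + 2 * (\<Sum>k<n. (real n - real (Suc k)) * c (Suc k))"
proof (induct n)
  case (Suc n)
  have edge: "(\<Sum>t<n. c (n - t)) = (\<Sum>k<n. c (Suc k))"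
    using sum.nat_diff_reindex[of "c \<circ> Suc" n] by (simp add: Suc_diff_Suc)
  have "(\<Sum>t<Suc n. \<Sum>s<Suc n. c (max t s - min t s))
      = (\<Sum>t<n. \<Sum>s<n. c (max t s - min t s)) + 2 * (\<Sum>t<n. c (n - t)) + c 0"
    by (simp add: sum.distrib max_def min_def)
  moreover have "(\<Sum>k<Suc n. (real (Suc n) - real (Suc k)) * c (Suc k))
      = (\<Sum>k<n. (real n - real (Suc k)) * c (Suc k)) + (\<Sum>k<n. c (Suc k))"
    by (simp add: algebra_simps flip: sum.distrib)
  ultimately show ?case
    by (simp add: Suc edge algebra_simps)
qed simp

definition pair_weight :: "real \<Rightarrow> nat \<Rightarrow> nat \<Rightarrow> nat \<Rightarrow> real \<Rightarrow> real" where
  "pair_weight m t s i u = (if i = t then u - m else 1) * (if i = s then u - m else 1)"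

lemma prod_pair_weight:
  assumes "t < n" "s < n"
  shows "(\<Prod>i<n. pair_weight m t s i (us ! i)) = (us ! t - m) * (us ! s - m)"
  using assms by (simp add: pair_weight_def prod.distrib prod.delta)

lemma square_mean_deviation:
  assumes "length us = n" "n > 0"
  shows "(sum_list us / real n - m)\<^sup>2 = (\<Sum>t<n. \<Sum>s<n. (us ! t - m) * (us ! s - m)) / (real n)\<^sup>2"
proof -
  have "sum_list us / real n - m = (\<Sum>t<n. us ! t - m) / real n"
    using assms by (simp add: sum_list_sum_nth atLeast0LessThan sum_subtractf field_simps)
  then show ?thesis
    by (simp add: power2_eq_square sum_product power_divide)
qed

locale stationary_measured_chain = measured_chain I K U Om
  for I :: "'i set" and K :: "'i \<Rightarrow> 'd::finite cmat" and U :: "real set" and Om :: "real \<Rightarrow> 'd cmat" +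
  fixes R :: "'d cmat"
  assumes R_psd: "psd R"
    and N_stationary: "kraus_chan I K R = R" and M_stationary: "kraus_chan U Om R = R"
begin

abbreviation \<mu> :: real where "\<mu> \<equiv> meas_mean R U Om"
abbreviation V :: real where "V \<equiv> meas_var R U Om"

definition lag_autocov :: "nat \<Rightarrow> real" where
  "lag_autocov k = (if k = 0 then V else corr R I K U Om (k - 1))"

lemma E_power_stationary: "(E ^^ n) R = R"
  by (induct n) (simp_all add: chan_E_def N_stationary M_stationary)

lemma weighted_steps_skip_ones:
  "(\<And>i. i < a \<Longrightarrow> h i = (\<lambda>_. 1)) \<Longrightarrow> weighted_steps h (a + b) R = weighted_steps (\<lambda>i. h (a + i)) b R"
  by (simp add: weighted_steps_add weighted_steps_ones E_power_stationary)

text \<open>With weight \<open>u - \<mu>\<close> in rounds \<open>t\<close> and \<open>s\<close> and weight \<open>1\<close> elsewhere, stationarity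
  absorbs the rounds before \<open>t\<close> and trace preservation the rounds after \<open>s\<close>.\<close>

lemma trace_pair_weight_diagonal:
  assumes "t < n"
  shows "Re (trace (weighted_steps (pair_weight \<mu> t t) n R)) = V"
proof -
  let ?h = "pair_weight \<mu> t t"
  have n: "n = t + Suc (n - t - 1)"
    using assms by simp
  have "weighted_steps ?h n R = weighted_steps (\<lambda>i. ?h (t + Suc i)) (n - t - 1) (weighted_step (?h t) R)"
    by (subst n, subst weighted_steps_skip_ones) (auto simp: pair_weight_def fun_eq_iff)
  then have "trace (weighted_steps ?h n R) = trace (weighted_step (?h t) R)"
    by (simp add: trace_weighted_steps_ones pair_weight_def fun_eq_iff)
  also have "\<dots> = (\<Sum>u\<in>U. (u - \<mu>)\<^sup>2 *\<^sub>R trace (Om u ** R ** adj (Om u)))"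
    by (simp add: weighted_step_def trace_sum trace_scaleR trace_kraus_chan[OF N_channel]
        trace_kraus_chan[OF M_channel] pair_weight_def power2_eq_square)
  finally show ?thesis
    by (simp add: meas_var_def Re_sum)
qed

lemma trace_pair_weight_off_diagonal:
  assumes "t < s" "s < n"
  shows "Re (trace (weighted_steps (pair_weight \<mu> t s) n R)) = corr R I K U Om (s - t - 1)"
proof -
  let ?h = "pair_weight \<mu> t s"
  let ?Eh = "chan_E_hat R I K U Om"
  define m where "m = s - t - 1"
  define r where "r = n - s - 1"
  have n: "n = t + Suc (m + Suc r)" and s: "s = t + Suc m"
    using assms by (simp_all add: m_def r_def)
  have center: "?h t = (\<lambda>u. u - \<mu>)" "?h (t + Suc m) = (\<lambda>u. u - \<mu>)"
    using assms by (auto simp: pair_weight_def fun_eq_iff s)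
  have ones: "weighted_steps (\<lambda>i. ?h (t + Suc i)) m X = (E ^^ m) X" for X
    by (rule weighted_steps_ones) (auto simp: pair_weight_def fun_eq_iff s)
  have "weighted_steps ?h n R = weighted_steps (\<lambda>i. ?h (t + Suc i)) (m + Suc r) (?Eh R)"
    by (subst n, subst weighted_steps_skip_ones)
      (use assms in \<open>auto simp: pair_weight_def fun_eq_iff center weighted_step_centered\<close>)
  also have "\<dots> = weighted_steps (\<lambda>i. ?h (t + Suc (m + i))) (Suc r) ((E ^^ m) (?Eh R))"
    by (simp only: weighted_steps_add ones)
  also have "\<dots> = weighted_steps (\<lambda>i. ?h (t + Suc (m + Suc i))) r (?Eh ((E ^^ m) (?Eh R)))"
    by (simp only: weighted_steps.simps add_0_right center weighted_step_centered)
  finally have "trace (weighted_steps ?h n R) = trace (?Eh ((E ^^ m) (?Eh R)))"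
    by (simp add: trace_weighted_steps_ones pair_weight_def fun_eq_iff s)
  then show ?thesis
    by (simp add: corr_def m_def)
qed

lemma outcome_covariance:
  assumes "t < n" "s < n"
  shows "(\<Sum>us\<in>outcomes n. (us ! t - \<mu>) * (us ! s - \<mu>) * Re (trace (traj I K U Om us R)))
       = lag_autocov (max t s - min t s)"
proof -
  have cov: "(\<Sum>us\<in>outcomes n. (us ! t - \<mu>) * (us ! s - \<mu>) * Re (trace (traj I K U Om us R)))
      = Re (trace (weighted_steps (pair_weight \<mu> t s) n R))"
    using arg_cong[OF sum_outcomes_weighted[where h="pair_weight \<mu> t s" and n=n and X=R],
        of "\<lambda>X. Re (trace X)"] assms
    by (simp add: trace_sum trace_scaleR Re_sum prod_pair_weight)
  have swap: "pair_weight \<mu> t s = pair_weight \<mu> s t"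
    by (simp add: pair_weight_def fun_eq_iff mult.commute)
  consider "t = s" | "t < s" | "s < t"
    by linarith
  then show ?thesis
  proof cases
    case 1
    then show ?thesis
      using cov trace_pair_weight_diagonal[of t n] assms by (simp add: lag_autocov_def)
  next
    case 2
    then show ?thesis
      using cov trace_pair_weight_off_diagonal[of t s n] assms by (simp add: lag_autocov_def)
  next
    case 3
    then show ?thesis
      using cov swap trace_pair_weight_off_diagonal[of s t n] assms by (simp add: lag_autocov_def)
  qed
qed

lemma t_aut_eq:
  assumes "n > 0" "V \<noteq> 0"
  shows "2 * V * t_aut R I K U Om n / real n
       = (real n * lag_autocov 0 + 2 * (\<Sum>k<n. (real n - real (Suc k)) * lag_autocov (Suc k))) / (real n)\<^sup>2"
proof -
  have "t_aut R I K U Om n = 1/2 + (\<Sum>k<n. (1 - real (Suc k) / real n) * (lag_autocov (Suc k) / V))"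
    by (simp add: t_aut_def autocorr_def lag_autocov_def sum.atLeast1_atMost_eq)
  also have "\<dots> = 1/2 + (\<Sum>k<n. (real n - real (Suc k)) * lag_autocov (Suc k)) / (real n * V)"
    using assms by (simp add: sum_divide_distrib field_simps)
  finally show ?thesis
    using assms by (simp add: lag_autocov_def field_simps power2_eq_square)
qed

theorem second_moment_empirical_mean:
  assumes "n > 0" "V \<noteq> 0"
  shows "(\<Sum>us\<in>outcomes n. (sum_list us / real n - \<mu>)\<^sup>2 * Re (trace (traj I K U Om us R)))
       = 2 * V * t_aut R I K U Om n / real n"
proof -
  have "(\<Sum>us\<in>outcomes n. (sum_list us / real n - \<mu>)\<^sup>2 * Re (trace (traj I K U Om us R)))
      = (\<Sum>us\<in>outcomes n. \<Sum>t<n. \<Sum>s<n. (us ! t - \<mu>) * (us ! s - \<mu>) * Re (trace (traj I K U Om us R)))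
        / (real n)\<^sup>2"
    using assms(1) by (simp add: square_mean_deviation sum_divide_distrib sum_distrib_right)
  also have "\<dots> = (\<Sum>t<n. \<Sum>s<n. \<Sum>us\<in>outcomes n. (us ! t - \<mu>) * (us ! s - \<mu>) * Re (trace (traj I K U Om us R)))
        / (real n)\<^sup>2"
    by (subst sum.swap, subst sum.swap) (rule refl)
  also have "\<dots> = (\<Sum>t<n. \<Sum>s<n. lag_autocov (max t s - min t s)) / (real n)\<^sup>2"
    by (simp add: outcome_covariance)
  finally show ?thesis
    by (simp add: sum_lag_square t_aut_eq[OF assms])
qed

lemma deviation_probability_le:
  assumes "V > 0" "0 < \<epsilon>" "0 < \<eta>"
    and sample_size: "2 * V / (\<epsilon>\<^sup>2 * \<eta>) * t_aut R I K U Om n \<le> real n"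
  shows "(\<Sum>us\<in>{us. set us \<subseteq> U \<and> length us = n \<and> \<epsilon> \<le> \<bar>(\<Sum>e\<leftarrow>us. e) / real n - \<mu>\<bar>}.
            Re (trace (traj I K U Om us R))) \<le> \<eta>"
proof -
  have "n > 0"
  proof (rule ccontr)
    assume "\<not> n > 0"
    then have "0 < 2 * V / (\<epsilon>\<^sup>2 * \<eta>) * t_aut R I K U Om n"
      using assms by (simp add: t_aut_def)
    then show False
      using sample_size \<open>\<not> n > 0\<close> by simp
  qed
  have "(\<Sum>us\<in>{us \<in> outcomes n. \<epsilon> \<le> \<bar>sum_list us / real n - \<mu>\<bar>}. Re (trace (traj I K U Om us R)))
      \<le> 2 * V * t_aut R I K U Om n / real n / \<epsilon>\<^sup>2"
    using weighted_chebyshev_inequality[of "outcomes n" "\<lambda>us. Re (trace (traj I K U Om us R))" \<epsilon>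
        "\<lambda>us. sum_list us / real n - \<mu>"]
      finite_lists_length_eq[OF finite_U] trace_traj_nonneg[OF R_psd] assms
    by (simp add: second_moment_empirical_mean[OF \<open>n > 0\<close>])
  also have "\<dots> \<le> \<eta>"
    using sample_size assms \<open>n > 0\<close> by (simp add: field_simps)
  finally show ?thesis
    by (simp add: conj_assoc)
qed

end

theorem lemma5p5:
  fixes n :: nat and H :: "'d::finite cmat" and \<beta> s :: real
    and I :: "'i set" and K :: "'i \<Rightarrow> 'd cmat"
    and U :: "real set" and Om :: "real \<Rightarrow> 'd cmat"
    and \<rho> :: "'d cmat" and \<epsilon> \<eta> :: real and Tburn KK :: nat
  assumes dim: "CARD('d) = 2 ^ n"
    and herm: "hermitian H" and beta: "\<beta> > 0"
    and N_chan: "is_channel I K" and M_chan: "is_channel U Om"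
    and N_db: "detailed_balance s (gibbs \<beta> H) I K"
    and M_db: "detailed_balance s (gibbs \<beta> H) U Om"
    and var_pos: "meas_var (gibbs \<beta> H) U Om > 0"
    and rho: "density_op \<rho>"
    and eps: "\<epsilon> > 0" and eta: "\<eta> > 0"
    and mix_exists: "\<exists>t. \<forall>\<sigma>. density_op \<sigma> \<longrightarrow>
                        trace_norm ((kraus_chan I K ^^ t) \<sigma> - gibbs \<beta> H) \<le> \<eta>"
    and burn: "Tburn = t_mix (gibbs \<beta> H) I K \<eta>"
    and K_large: "real KK \<ge> 2 * meas_var (gibbs \<beta> H) U Om / (\<epsilon>^2 * \<eta>)
                              * t_aut (gibbs \<beta> H) I K U Om KK"
  shows "traj_prob I K U Om \<rho> Tburn KK
           (\<lambda>es. \<bar>(\<Sum>e\<leftarrow>es. e) / real KK - meas_mean (gibbs \<beta> H) U Om\<bar> \<ge> \<epsilon>)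
         \<le> 2 * \<eta>"
proof -
  define R where "R = gibbs \<beta> H"
  have "psd R"
    unfolding R_def using herm by (rule psd_gibbs)
  then interpret stationary_measured_chain I K U Om R
    using N_chan M_chan N_db M_db by unfold_locales (simp_all add: R_def detailed_balance_stationary)
  have burn_in: "trace_norm ((N ^^ Tburn) \<rho> - R) \<le> \<eta>"
    using LeastI_ex[OF mix_exists] rho by (simp add: burn t_mix_def R_def)
  have "traj_prob I K U Om \<rho> Tburn KK (\<lambda>es. \<bar>(\<Sum>e\<leftarrow>es. e) / real KK - \<mu>\<bar> \<ge> \<epsilon>)
      \<le> (\<Sum>us\<in>{us. set us \<subseteq> U \<and> length us = KK \<and> \<epsilon> \<le> \<bar>(\<Sum>e\<leftarrow>us. e) / real KK - \<mu>\<bar>}.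
            Re (trace (traj I K U Om us R))) + trace_norm ((N ^^ Tburn) \<rho> - R)"
    unfolding traj_prob_def by (intro sum_outcomes_trace_le[where n=KK]) auto
  also have "\<dots> \<le> \<eta> + \<eta>"
    using deviation_probability_le[OF _ eps eta] var_pos K_large burn_in
    by (intro add_mono) (simp_all add: R_def)
  finally show ?thesis
    by (simp add: R_def)
qed

end
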